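(* Let $\kappa_1,\kappa_2,\kappa_5,\kappa_6,\kappa_7,\kappa_8,\theta,\mu>0$ and consider the ODE system, with positive initial values, $c'=\kappa_6c_p-\kappa_5c$, $c_p'=\kappa_5c+\kappa_8c_{pp}-(\kappa_6+\kappa_7)c_p$, $c_{pp}'=\kappa_7c_p-\kappa_8c_{pp}$, $(x^* )'=\kappa_2c_{pp}m-\kappa_1x^*$, $z'=z(\theta m-\mu)$, where $m(t)=\dfrac{\kappa_1x^*(t)+\mu z(t)}{\kappa_2c_{pp}(t)+\theta z(t)}$. Let $M=x^*(0)+z(0)$, $L=c(0)+c_p(0)+c_{pp}(0)$, and $\bar c_{pp}=\dfrac{\kappa_5\kappa_6\kappa_7\kappa_8L}{\kappa_6^2\kappa_8^2+\kappa_5\kappa_6\kappa_8^2+\kappa_5\kappa_6\kappa_7\kappa_8}$. If $\theta\kappa_1M>\mu\kappa_2\bar c_{pp}$, then $z(t)\to\dfrac{\theta\kappa_1M-\mu\kappa_2\bar c_{pp}}{\theta\kappa_1}$ as $t\to\infty$.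
   Context: This is the deterministic part of a hybrid approximation of a dimer-catalyzer network controlled by a basic ACR controller; $m(t)$ represents the mean of the stochastically modeled target species. (The full system also contains a variable $x_1$ with $x_1'=0$, which does not affect the equations above.) *)

theory Defs
  imports "HOL-Analysis.Analysis"
begin

end

theory Submission
  imports Defs "HOL-Real_Asymp.Real_Asymp"
begin

text \<open>The linear subsystem \<open>c, cp, cpp\<close> conserves \<open>L = c + cp + cpp\<close>, and the sum of squared
  deviations from its equilibrium, weighted inversely to the equilibrium values, decays at rate
  \<open>2 min k5 k8\<close>; hence \<open>cpp \<rightarrow> cbar\<close>. All species stay positive and \<open>xs + z = M\<close> is conserved,
  so substituting \<open>xs = M - z\<close> turns the equation for \<open>z\<close> into the logistic-type equation
  \<open>z' = z (q t - \<theta> k1 z) / (k2 cpp + \<theta> z)\<close> with \<open>q t = \<theta> k1 M - \<mu> k2 cpp t \<rightarrow> \<theta> k1 z\<^sub>\<infinity>\<close>, where \<open>z\<^sub>\<infinity>\<close> is the claimed limit.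
  Since the denominator is bounded, \<open>ln z\<close> grows at a uniform rate while \<open>z < z\<^sub>\<infinity> - \<epsilon>\<close> and
  decreases at a uniform rate while \<open>z > z\<^sub>\<infinity> + \<epsilon>\<close>, so \<open>z\<close> eventually enters and never leaves
  \<open>[z\<^sub>\<infinity> - \<epsilon>, z\<^sub>\<infinity> + \<epsilon>]\<close>.\<close>

lemma continuous_on_atLeast_if_deriv:
  assumes "\<And>t. t \<ge> 0 \<Longrightarrow> (f has_real_derivative f' t) (at t within {0..})"
  shows "continuous_on {0..} f"
  using assms by (meson DERIV_continuous atLeast_iff continuous_on_eq_continuous_within)

lemma mono_on_atLeast_if_deriv_nonneg:
  fixes f f' :: "real \<Rightarrow> real"
  assumes "0 \<le> a" "a \<le> b"
    and deriv: "\<And>t. t \<ge> 0 \<Longrightarrow> (f has_real_derivative f' t) (at t within {0..})"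
    and nonneg: "\<And>t. a < t \<Longrightarrow> t < b \<Longrightarrow> f' t \<ge> 0"
  shows "f a \<le> f b"
proof (rule DERIV_nonneg_imp_increasing_open[OF \<open>a \<le> b\<close>])
  fix t assume t: "a < t" "t < b"
  then have "t \<in> interior {0..}" using \<open>0 \<le> a\<close> by simp
  then have "(f has_real_derivative f' t) (at t)"
    using deriv[of t] t \<open>0 \<le> a\<close> at_within_interior by fastforce
  then show "\<exists>y. (f has_real_derivative y) (at t) \<and> 0 \<le> y"
    using nonneg[OF t] by blast
next
  show "continuous_on {a..b} f"
    using continuous_on_atLeast_if_deriv[OF deriv] continuous_on_subset \<open>0 \<le> a\<close> by fastforce
qed

lemma exp_weighted_mono:
  fixes f f' :: "real \<Rightarrow> real"
  assumes "0 \<le> a" "a \<le> b"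
    and deriv: "\<And>t. t \<ge> 0 \<Longrightarrow> (f has_real_derivative f' t) (at t within {0..})"
    and nonneg: "\<And>t. a < t \<Longrightarrow> t < b \<Longrightarrow> f' t + k * f t \<ge> 0"
  shows "f a * exp (k * a) \<le> f b * exp (k * b)"
proof (rule mono_on_atLeast_if_deriv_nonneg[OF assms(1,2)])
  fix t :: real assume "t \<ge> 0"
  show "((\<lambda>t. f t * exp (k * t)) has_real_derivative (f' t + k * f t) * exp (k * t))
      (at t within {0..})"
    by (rule derivative_eq_intros deriv \<open>t \<ge> 0\<close> refl | simp add: algebra_simps)+
next
  fix t assume "a < t" "t < b"
  then show "(f' t + k * f t) * exp (k * t) \<ge> 0" using nonneg by simp
qed

lemma pos_if_deriv_ge_linear:
  fixes f f' :: "real \<Rightarrow> real"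
  assumes "f 0 > 0" "T \<ge> 0"
    and deriv: "\<And>t. t \<ge> 0 \<Longrightarrow> (f has_real_derivative f' t) (at t within {0..})"
    and "\<And>t. 0 < t \<Longrightarrow> t < T \<Longrightarrow> f' t + k * f t \<ge> 0"
  shows "f T > 0"
proof -
  have "f 0 \<le> f T * exp (k * T)"
    using exp_weighted_mono[of 0 T f f' k] assms by simp
  then have "0 < f T * exp (k * T)" using \<open>f 0 > 0\<close> by linarith
  then show ?thesis by (simp add: zero_less_mult_iff)
qed

lemma pos_on_atLeast_by_continuation:
  fixes g :: "real \<Rightarrow> real"
  assumes cont: "continuous_on {0..} g" and "g 0 > 0"
    and step: "\<And>T. T > 0 \<Longrightarrow> (\<And>t. 0 \<le> t \<Longrightarrow> t < T \<Longrightarrow> g t > 0) \<Longrightarrow> g T > 0"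
    and "s \<ge> 0"
  shows "g s > 0"
proof (rule ccontr)
  assume "\<not> g s > 0"
  define Z where "Z = {0..s} \<inter> g -` {..0}"
  have "closed Z" unfolding Z_def
    by (rule continuous_closed_preimage) (use continuous_on_subset[OF cont] in auto)
  moreover have "Z \<noteq> {}" using \<open>\<not> g s > 0\<close> \<open>s \<ge> 0\<close> unfolding Z_def by auto
  moreover have bdd: "bdd_below Z" unfolding Z_def by (auto intro: bdd_belowI[where m=0])
  ultimately have "Inf Z \<in> Z" by (rule closed_contains_Inf[rotated 2])
  then have r: "0 \<le> Inf Z" "g (Inf Z) \<le> 0" unfolding Z_def by auto
  then have "Inf Z > 0" using \<open>g 0 > 0\<close> by (cases "Inf Z = 0") auto
  moreover have "g t > 0" if "0 \<le> t" "t < Inf Z" for t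
  proof (rule ccontr)
    assume "\<not> g t > 0"
    then have "t \<in> Z" using that \<open>Inf Z \<in> Z\<close> unfolding Z_def by auto
    then show False using cInf_lower[OF _ bdd] that by fastforce
  qed
  ultimately show False using step r(2) by fastforce
qed

lemma nonneg_barrier:
  fixes g g' :: "real \<Rightarrow> real"
  assumes "a \<ge> 0" "g a \<ge> 0"
    and deriv: "\<And>t. t \<ge> 0 \<Longrightarrow> (g has_real_derivative g' t) (at t within {0..})"
    and push: "\<And>t. t > a \<Longrightarrow> g t < 0 \<Longrightarrow> g' t \<ge> 0"
    and "s \<ge> a"
  shows "g s \<ge> 0"
proof (rule ccontr)
  assume "\<not> g s \<ge> 0"
  define Z where "Z = {a..s} \<inter> g -` {0..}"
  have "closed Z" unfolding Z_def
    by (rule continuous_closed_preimage)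
      (use continuous_on_subset[OF continuous_on_atLeast_if_deriv[OF deriv]] \<open>a \<ge> 0\<close> in auto)
  moreover have "Z \<noteq> {}" using assms(2,5) unfolding Z_def by auto
  moreover have bdd: "bdd_above Z" unfolding Z_def by (auto intro: bdd_aboveI[where M=s])
  ultimately have "Sup Z \<in> Z" by (rule closed_contains_Sup[rotated 2])
  then have r: "a \<le> Sup Z" "g (Sup Z) \<ge> 0" "Sup Z \<le> s" unfolding Z_def by auto
  have neg: "g t < 0" if "Sup Z < t" "t \<le> s" for t
  proof (rule ccontr)
    assume "\<not> g t < 0"
    then have "t \<in> Z" using that r unfolding Z_def by auto
    then show False using cSup_upper[OF _ bdd] that by fastforce
  qed
  have "g (Sup Z) \<le> g s"
    by (rule mono_on_atLeast_if_deriv_nonneg[OF _ r(3) deriv]) (use r assms(1) push neg in auto)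
  then show False using r \<open>\<not> g s \<ge> 0\<close> by simp
qed

lemma eventually_ge_if_deriv_ge_below:
  fixes w w' :: "real \<Rightarrow> real"
  assumes deriv: "\<And>t. t \<ge> 0 \<Longrightarrow> (w has_real_derivative w' t) (at t within {0..})"
    and "\<delta> > 0" and push: "\<forall>\<^sub>F t in at_top. w t < A \<longrightarrow> w' t \<ge> \<delta>"
  shows "\<forall>\<^sub>F t in at_top. w t \<ge> A"
proof -
  obtain t0 where "t0 \<ge> 0" and push0: "\<And>t. t \<ge> t0 \<Longrightarrow> w t < A \<Longrightarrow> w' t \<ge> \<delta>"
    using push unfolding eventually_at_top_linorder by (metis max.cobounded1 max.cobounded2 order_trans)
  have "\<exists>t1\<ge>t0. w t1 \<ge> A"
  proof (rule ccontr)
    assume "\<not> ?thesis"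
    then have below: "w t < A" if "t \<ge> t0" for t using that by force
    define t where "t = t0 + (A - w t0) / \<delta>"
    have "t \<ge> t0" unfolding t_def using below[of t0] \<open>\<delta> > 0\<close> by simp
    have "w t0 - \<delta> * t0 \<le> w t - \<delta> * t"
    proof (rule mono_on_atLeast_if_deriv_nonneg[OF \<open>t0 \<ge> 0\<close> \<open>t \<ge> t0\<close>])
      fix s :: real assume "s \<ge> 0"
      show "((\<lambda>s. w s - \<delta> * s) has_real_derivative w' s - \<delta>) (at s within {0..})"
        by (rule derivative_eq_intros deriv \<open>s \<ge> 0\<close> refl | simp)+
    next
      fix s assume "t0 < s" "s < t"
      then show "w' s - \<delta> \<ge> 0" using push0 below by simp
    qed
    then have "w t \<ge> A" unfolding t_def using \<open>\<delta> > 0\<close> by (simp add: field_simps)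
    then show False using below \<open>t \<ge> t0\<close> by fastforce
  qed
  then obtain t1 where "t1 \<ge> t0" "w t1 \<ge> A" by blast
  have "w s - A \<ge> 0" if "s \<ge> t1" for s
  proof (rule nonneg_barrier[where g = "\<lambda>t. w t - A" and g' = w' and a = t1])
    fix t :: real assume "t \<ge> 0"
    show "((\<lambda>t. w t - A) has_real_derivative w' t) (at t within {0..})"
      by (rule derivative_eq_intros deriv \<open>t \<ge> 0\<close> refl | simp)+
  next
    fix t assume "t > t1" "w t - A < 0"
    then show "w' t \<ge> 0" using push0[of t] \<open>t1 \<ge> t0\<close> \<open>\<delta> > 0\<close> by simp
  qed (use that \<open>t0 \<ge> 0\<close> \<open>t1 \<ge> t0\<close> \<open>w t1 \<ge> A\<close> in auto)
  then show ?thesis unfolding eventually_at_top_linorder by auto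
qed

lemma const_on_atLeast_if_deriv_zero:
  fixes f :: "real \<Rightarrow> real"
  assumes "\<And>t. t \<ge> 0 \<Longrightarrow> (f has_real_derivative 0) (at t within {0..})" "t \<ge> 0"
  shows "f t = f 0"
proof -
  obtain C where "\<forall>s\<in>{0::real..}. f s = C"
    using has_field_derivative_zero_constant[of "{0..}" f] assms(1) by auto
  then show ?thesis using assms(2) by simp
qed

lemma le_exp_decay_if_deriv_le:
  fixes f f' :: "real \<Rightarrow> real"
  assumes deriv: "\<And>t. t \<ge> 0 \<Longrightarrow> (f has_real_derivative f' t) (at t within {0..})"
    and decay: "\<And>t. t > 0 \<Longrightarrow> f' t + k * f t \<le> 0" and "t \<ge> 0"
  shows "f t \<le> f 0 * exp (- (k * t))"
proof -
  have "- f 0 * exp (k * 0) \<le> - f t * exp (k * t)"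
  proof (rule exp_weighted_mono[where f' = "\<lambda>t. - f' t"])
    fix s :: real assume "s \<ge> 0"
    then show "((\<lambda>t. - f t) has_real_derivative - f' s) (at s within {0..})"
      using DERIV_minus[OF deriv] by simp
  next
    fix s assume "0 < s" "s < t"
    then show "- f' s + k * - f s \<ge> 0" using decay[of s] by simp
  qed (use \<open>t \<ge> 0\<close> in auto)
  then show ?thesis by (simp add: exp_minus field_simps)
qed

lemma chain_dissipation_ineq:
  fixes k5 k6 k7 k8 e1 e2 e3 :: real
  assumes "k5 > 0" "k6 > 0" "k7 > 0" "k8 > 0" and "e1 + e2 + e3 = 0"
  shows "min k5 k8 * (k5 * k7 * e1\<^sup>2 + k6 * k7 * e2\<^sup>2 + k6 * k8 * e3\<^sup>2)
    \<le> k7 * (k5 * e1 - k6 * e2)\<^sup>2 + k6 * (k7 * e2 - k8 * e3)\<^sup>2"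
proof -
  define W A B where "W = k5 * k7 * e1\<^sup>2 + k6 * k7 * e2\<^sup>2 + k6 * k8 * e3\<^sup>2"
    and "A = k5 * e1 - k6 * e2" and "B = k7 * e2 - k8 * e3"
  have e1: "e1 = - e2 - e3" using assms(5) by simp
  have "k5 * k8 * W = k7 * k8 * A\<^sup>2 + k5 * k6 * B\<^sup>2 - k6 * k7 * (k6 * k8 + k5 * k8 + k5 * k7) * e2\<^sup>2"
    unfolding W_def A_def B_def e1 by (simp add: algebra_simps power2_eq_square)
  also have "\<dots> \<le> k7 * k8 * A\<^sup>2 + k5 * k6 * B\<^sup>2"
    using assms(1-4) by simp
  finally have "min k5 k8 * (k5 * k8 * W) \<le> min k5 k8 * (k7 * k8 * A\<^sup>2 + k5 * k6 * B\<^sup>2)"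
    using assms(1,4) by (simp add: mult_left_mono)
  also have "\<dots> \<le> k5 * k8 * (k7 * A\<^sup>2 + k6 * B\<^sup>2)"
  proof -
    have "min k5 k8 * (k7 * k8 * A\<^sup>2) \<le> k5 * (k7 * k8 * A\<^sup>2)"
      using assms by (intro mult_right_mono) auto
    moreover have "min k5 k8 * (k5 * k6 * B\<^sup>2) \<le> k8 * (k5 * k6 * B\<^sup>2)"
      using assms by (intro mult_right_mono) auto
    ultimately show ?thesis by (simp add: algebra_simps)
  qed
  finally have "k5 * k8 * (min k5 k8 * W) \<le> k5 * k8 * (k7 * A\<^sup>2 + k6 * B\<^sup>2)"
    by (simp add: algebra_simps)
  then show ?thesis
    unfolding W_def A_def B_def using assms(1,4) by simp
qed

locale phospho_chain =
  fixes k5 k6 k7 k8 :: real and c cp cpp :: "real \<Rightarrow> real"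
  assumes rates_pos: "k5 > 0" "k6 > 0" "k7 > 0" "k8 > 0"
    and ode_c: "\<And>t. t \<ge> 0 \<Longrightarrow>
        (c has_real_derivative (k6 * cp t - k5 * c t)) (at t within {0..})"
    and ode_cp: "\<And>t. t \<ge> 0 \<Longrightarrow>
        (cp has_real_derivative (k5 * c t + k8 * cpp t - (k6 + k7) * cp t)) (at t within {0..})"
    and ode_cpp: "\<And>t. t \<ge> 0 \<Longrightarrow>
        (cpp has_real_derivative (k7 * cp t - k8 * cpp t)) (at t within {0..})"
begin

lemma total_const: "t \<ge> 0 \<Longrightarrow> c t + cp t + cpp t = c 0 + cp 0 + cpp 0"
proof (rule const_on_atLeast_if_deriv_zero[of "\<lambda>t. c t + cp t + cpp t"])
  fix t :: real assume "t \<ge> 0"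
  have "((\<lambda>t. c t + cp t + cpp t) has_real_derivative
      (k6 * cp t - k5 * c t) + (k5 * c t + k8 * cpp t - (k6 + k7) * cp t) + (k7 * cp t - k8 * cpp t))
      (at t within {0..})"
    by (intro DERIV_add ode_c ode_cp ode_cpp \<open>t \<ge> 0\<close>)
  then show "((\<lambda>t. c t + cp t + cpp t) has_real_derivative 0) (at t within {0..})"
    by (simp add: algebra_simps)
qed

lemma lyapunov_decay:
  assumes equil: "c1 + p1 + b1 = c 0 + cp 0 + cpp 0" "k6 * p1 = k5 * c1" "k7 * p1 = k8 * b1"
    and "t \<ge> 0"
  defines "W \<equiv> \<lambda>t. k5 * k7 * (c t - c1)\<^sup>2 + k6 * k7 * (cp t - p1)\<^sup>2 + k6 * k8 * (cpp t - b1)\<^sup>2"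
  shows "W t \<le> W 0 * exp (- (2 * min k5 k8 * t))"
proof -
  define A B where "A t = k5 * (c t - c1) - k6 * (cp t - p1)"
    and "B t = k7 * (cp t - p1) - k8 * (cpp t - b1)" for t
  have W_deriv: "(W has_real_derivative - 2 * (k7 * (A t)\<^sup>2 + k6 * (B t)\<^sup>2)) (at t within {0..})"
    if "t \<ge> 0" for t
  proof -
    have rates: "k6 * cp t - k5 * c t = - A t" "k7 * cp t - k8 * cpp t = B t"
      "k5 * c t + k8 * cpp t - (k6 + k7) * cp t = A t - B t"
      using equil unfolding A_def B_def by (simp_all add: algebra_simps)
    show ?thesis
      unfolding W_def
      by (rule derivative_eq_intros ode_c ode_cp ode_cpp \<open>t \<ge> 0\<close> refl | simp only: rates)+
        (simp add: A_def B_def algebra_simps power2_eq_square)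
  qed
  have dissip: "min k5 k8 * W t \<le> k7 * (A t)\<^sup>2 + k6 * (B t)\<^sup>2" if "t \<ge> 0" for t
    unfolding W_def A_def B_def
    by (rule chain_dissipation_ineq[OF rates_pos]) (use total_const[OF that] equil(1) in simp)
  show ?thesis
  proof (rule le_exp_decay_if_deriv_le[OF W_deriv _ \<open>t \<ge> 0\<close>])
    fix s :: real assume "s > 0"
    then show "- 2 * (k7 * (A s)\<^sup>2 + k6 * (B s)\<^sup>2) + 2 * min k5 k8 * W s \<le> 0"
      using dissip[of s] by simp
  qed
qed

lemma cpp_tendsto:
  "(cpp \<longlongrightarrow> k5 * k7 * (c 0 + cp 0 + cpp 0) / (k6 * k8 + k5 * k8 + k5 * k7)) at_top"
proof -
  define L S where "L = c 0 + cp 0 + cpp 0" and "S = k6 * k8 + k5 * k8 + k5 * k7"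
  have "S > 0" unfolding S_def using rates_pos by (simp add: add_pos_pos)
  define c1 p1 b1 where "c1 = k6 * k8 * L / S" and "p1 = k5 * k8 * L / S" and "b1 = k5 * k7 * L / S"
  have "c1 + p1 + b1 = (k6 * k8 * L + k5 * k8 * L + k5 * k7 * L) / S"
    unfolding c1_def p1_def b1_def by (simp add: add_divide_distrib)
  also have "k6 * k8 * L + k5 * k8 * L + k5 * k7 * L = S * L"
    unfolding S_def by (simp add: algebra_simps)
  finally have equil: "c1 + p1 + b1 = L" "k6 * p1 = k5 * c1" "k7 * p1 = k8 * b1"
    using \<open>S > 0\<close> unfolding c1_def p1_def b1_def by simp_all
  define W0 where "W0 = k5 * k7 * (c 0 - c1)\<^sup>2 + k6 * k7 * (cp 0 - p1)\<^sup>2 + k6 * k8 * (cpp 0 - b1)\<^sup>2"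
  have "((\<lambda>t. (cpp t - b1)\<^sup>2) \<longlongrightarrow> 0) at_top"
  proof (rule Lim_null_comparison)
    show "\<forall>\<^sub>F t in at_top. norm ((cpp t - b1)\<^sup>2) \<le> W0 / (k6 * k8) * exp (- (2 * min k5 k8 * t))"
      unfolding eventually_at_top_linorder
    proof (intro exI allI impI)
      fix t :: real assume "t \<ge> 0"
      have "k6 * k8 * (cpp t - b1)\<^sup>2
          \<le> k5 * k7 * (c t - c1)\<^sup>2 + k6 * k7 * (cp t - p1)\<^sup>2 + k6 * k8 * (cpp t - b1)\<^sup>2"
        using rates_pos by simp
      also have "\<dots> \<le> W0 * exp (- (2 * min k5 k8 * t))"
        using lyapunov_decay[OF equil[unfolded L_def] \<open>t \<ge> 0\<close>] unfolding W0_def by simp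
      finally show "norm ((cpp t - b1)\<^sup>2) \<le> W0 / (k6 * k8) * exp (- (2 * min k5 k8 * t))"
        using rates_pos by (simp add: field_simps)
    qed
    show "((\<lambda>t. W0 / (k6 * k8) * exp (- (2 * min k5 k8 * t))) \<longlongrightarrow> 0) at_top"
      using rates_pos by real_asymp
  qed
  then have "((\<lambda>t. \<bar>cpp t - b1\<bar>) \<longlongrightarrow> 0) at_top"
    using tendsto_real_sqrt by fastforce
  then show ?thesis
    unfolding b1_def L_def S_def by (simp add: LIM_zero_iff tendsto_rabs_zero_iff)
qed

end

context
  fixes z q D :: "real \<Rightarrow> real" and a zs Dmax :: real
  assumes deriv: "\<And>t. t \<ge> 0 \<Longrightarrow>
      (z has_real_derivative z t * (q t - a * z t) / D t) (at t within {0..})"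
    and z_pos: "\<And>t. t \<ge> 0 \<Longrightarrow> z t > 0"
    and D_pos: "\<And>t. t \<ge> 0 \<Longrightarrow> D t > 0" and D_le: "\<And>t. t \<ge> 0 \<Longrightarrow> D t \<le> Dmax"
    and a_pos: "a > 0" and zs_pos: "zs > 0" and q_lim: "(q \<longlongrightarrow> a * zs) at_top"
begin

lemma logistic_ln_deriv:
  assumes "t \<ge> 0"
  shows "((\<lambda>t. ln (z t)) has_real_derivative (q t - a * z t) / D t) (at t within {0..})"
proof -
  have "((\<lambda>t. ln (z t)) has_real_derivative
      (1 / z t) * (z t * (q t - a * z t) / D t)) (at t within {0..})"
    by (rule DERIV_ln_divide[THEN DERIV_chain2, OF z_pos[OF assms] deriv[OF assms]])
  then show ?thesis using z_pos[OF assms] by simp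
qed

lemma logistic_eventually_band:
  assumes "0 < e" "e < zs"
  shows "\<forall>\<^sub>F t in at_top. zs - e \<le> z t \<and> z t \<le> zs + e"
proof -
  define \<delta> where "\<delta> = a * e / 2 / Dmax"
  have "a * e > 0" using a_pos \<open>e > 0\<close> by simp
  moreover have "Dmax > 0" using D_pos[of 0] D_le[of 0] by linarith
  ultimately have "\<delta> > 0" unfolding \<delta>_def by simp
  have rate_bound: "\<delta> \<le> N / D t" if "t \<ge> 0" "a * e / 2 \<le> N" for t N
    unfolding \<delta>_def
    by (rule frac_le) (use that \<open>a * e > 0\<close> D_pos[OF that(1)] D_le[OF that(1)] in auto)
  have "\<forall>\<^sub>F t in at_top. dist (q t) (a * zs) < a * e / 2"
    using q_lim \<open>a * e > 0\<close> by (intro tendstoD) auto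
  then have close:
    "\<forall>\<^sub>F t in at_top. t \<ge> 0 \<and> a * zs - a * e / 2 < q t \<and> q t < a * zs + a * e / 2"
    using eventually_ge_at_top[of 0] by eventually_elim (unfold dist_real_def abs_less_iff, auto)
  have "\<forall>\<^sub>F t in at_top. ln (z t) \<ge> ln (zs - e)"
  proof (rule eventually_ge_if_deriv_ge_below[OF logistic_ln_deriv \<open>\<delta> > 0\<close>])
    show "\<forall>\<^sub>F t in at_top. ln (z t) < ln (zs - e) \<longrightarrow> \<delta> \<le> (q t - a * z t) / D t"
      using close
    proof eventually_elim
      case (elim t)
      show ?case
      proof
        assume "ln (z t) < ln (zs - e)"
        then have "z t < zs - e" using z_pos elim \<open>e < zs\<close> by simp
        then have "a * z t \<le> a * (zs - e)" using a_pos by simp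
        then have "a * e / 2 \<le> q t - a * z t" using elim by (simp add: right_diff_distrib)
        then show "\<delta> \<le> (q t - a * z t) / D t" using elim by (intro rate_bound) auto
      qed
    qed
  qed
  moreover have "\<forall>\<^sub>F t in at_top. - ln (z t) \<ge> - ln (zs + e)"
  proof (rule eventually_ge_if_deriv_ge_below[OF DERIV_minus[OF logistic_ln_deriv] \<open>\<delta> > 0\<close>])
    show "\<forall>\<^sub>F t in at_top. - ln (z t) < - ln (zs + e) \<longrightarrow> \<delta> \<le> - ((q t - a * z t) / D t)"
      using close
    proof eventually_elim
      case (elim t)
      show ?case
      proof
        assume "- ln (z t) < - ln (zs + e)"
        then have "z t > zs + e" using z_pos elim \<open>e > 0\<close> zs_pos by simp
        then have "a * z t \<ge> a * (zs + e)" using a_pos by simp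
        then have "a * e / 2 \<le> - (q t - a * z t)" using elim by (simp add: distrib_left)
        then show "\<delta> \<le> - ((q t - a * z t) / D t)"
          unfolding minus_divide_left using elim by (intro rate_bound) auto
      qed
    qed
  qed
  ultimately show ?thesis
    using close by eventually_elim (use z_pos assms in auto)
qed

lemma logistic_tendsto: "(z \<longlongrightarrow> zs) at_top"
proof (rule tendstoI)
  fix \<epsilon> :: real assume "\<epsilon> > 0"
  define e where "e = min (\<epsilon> / 2) (zs / 2)"
  have "0 < e" "e < zs" "e < \<epsilon>" unfolding e_def using \<open>\<epsilon> > 0\<close> zs_pos by auto
  from logistic_eventually_band[OF \<open>0 < e\<close> \<open>e < zs\<close>]
  show "\<forall>\<^sub>F t in at_top. dist (z t) zs < \<epsilon>"
    by eventually_elim (use \<open>e < \<epsilon>\<close> in \<open>auto simp: dist_real_def\<close>)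
qed

end

locale dimer_catalyzer = phospho_chain k5 k6 k7 k8 c cp cpp
  for k5 k6 k7 k8 :: real and c cp cpp :: "real \<Rightarrow> real" +
  fixes k1 k2 \<theta> \<mu> :: real and xs z m :: "real \<Rightarrow> real"
  assumes params_pos: "k1 > 0" "k2 > 0" "\<theta> > 0" "\<mu> > 0"
    and init_pos: "c 0 > 0" "cp 0 > 0" "cpp 0 > 0" "xs 0 > 0" "z 0 > 0"
    and m_def: "\<And>t. m t = (k1 * xs t + \<mu> * z t) / (k2 * cpp t + \<theta> * z t)"
    and ode_xs: "\<And>t. t \<ge> 0 \<Longrightarrow>
        (xs has_real_derivative (k2 * cpp t * m t - k1 * xs t)) (at t within {0..})"
    and ode_z: "\<And>t. t \<ge> 0 \<Longrightarrow>
        (z has_real_derivative (z t * (\<theta> * m t - \<mu>))) (at t within {0..})"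
begin

definition state_pos :: "real \<Rightarrow> bool" where
  "state_pos t \<longleftrightarrow> c t > 0 \<and> cp t > 0 \<and> cpp t > 0 \<and> xs t > 0 \<and> z t > 0"

lemma m_pos: "state_pos t \<Longrightarrow> m t > 0"
  unfolding state_pos_def m_def using params_pos by (simp add: add_pos_pos)

lemma state_pos_propagates:
  assumes "T > 0" and before: "\<And>t. 0 \<le> t \<Longrightarrow> t < T \<Longrightarrow> state_pos t"
  shows "state_pos T"
proof -
  have pos: "c t > 0" "cp t > 0" "cpp t > 0" "xs t > 0" "z t > 0" "m t > 0"
    if "0 < t" "t < T" for t
    using before[of t] m_pos[of t] that by (auto simp: state_pos_def)
  note rates = rates_pos params_pos
  have "c T > 0"
  proof (rule pos_if_deriv_ge_linear[OF init_pos(1) _ ode_c, where k = k5])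
    fix t assume t: "0 < t" "t < T"
    show "k6 * cp t - k5 * c t + k5 * c t \<ge> 0" using pos[OF t] rates by simp
  qed (use \<open>T > 0\<close> in simp)
  moreover have "cp T > 0"
  proof (rule pos_if_deriv_ge_linear[OF init_pos(2) _ ode_cp, where k = "k6 + k7"])
    fix t assume t: "0 < t" "t < T"
    show "k5 * c t + k8 * cpp t - (k6 + k7) * cp t + (k6 + k7) * cp t \<ge> 0"
      using pos[OF t] rates by simp
  qed (use \<open>T > 0\<close> in simp)
  moreover have "cpp T > 0"
  proof (rule pos_if_deriv_ge_linear[OF init_pos(3) _ ode_cpp, where k = k8])
    fix t assume t: "0 < t" "t < T"
    show "k7 * cp t - k8 * cpp t + k8 * cpp t \<ge> 0" using pos[OF t] rates by simp
  qed (use \<open>T > 0\<close> in simp)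
  moreover have "xs T > 0"
  proof (rule pos_if_deriv_ge_linear[OF init_pos(4) _ ode_xs, where k = k1])
    fix t assume t: "0 < t" "t < T"
    show "k2 * cpp t * m t - k1 * xs t + k1 * xs t \<ge> 0" using pos[OF t] rates by simp
  qed (use \<open>T > 0\<close> in simp)
  moreover have "z T > 0"
  proof (rule pos_if_deriv_ge_linear[OF init_pos(5) _ ode_z, where k = \<mu>])
    fix t assume t: "0 < t" "t < T"
    show "z t * (\<theta> * m t - \<mu>) + \<mu> * z t \<ge> 0" using pos[OF t] rates by (simp add: algebra_simps)
  qed (use \<open>T > 0\<close> in simp)
  ultimately show ?thesis unfolding state_pos_def by simp
qed

lemma state_pos: "t \<ge> 0 \<Longrightarrow> state_pos t"
proof -
  define g where "g t = min (c t) (min (cp t) (min (cpp t) (min (xs t) (z t))))" for t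
  have g_pos_iff: "g t > 0 \<longleftrightarrow> state_pos t" for t
    unfolding g_def state_pos_def by simp
  have "continuous_on {0..} g" unfolding g_def
    by (intro continuous_on_min continuous_on_atLeast_if_deriv[OF ode_c]
        continuous_on_atLeast_if_deriv[OF ode_cp] continuous_on_atLeast_if_deriv[OF ode_cpp]
        continuous_on_atLeast_if_deriv[OF ode_xs] continuous_on_atLeast_if_deriv[OF ode_z])
  moreover have "g 0 > 0" using init_pos g_pos_iff state_pos_def by simp
  ultimately show "t \<ge> 0 \<Longrightarrow> state_pos t"
    using pos_on_atLeast_by_continuation[of g] state_pos_propagates g_pos_iff by metis
qed

lemma denominator_pos: "t \<ge> 0 \<Longrightarrow> k2 * cpp t + \<theta> * z t > 0"
  using state_pos[of t] params_pos by (simp add: state_pos_def add_pos_pos)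

lemma xs_z_const: "t \<ge> 0 \<Longrightarrow> xs t + z t = xs 0 + z 0"
proof (rule const_on_atLeast_if_deriv_zero[of "\<lambda>t. xs t + z t"])
  fix t :: real assume "t \<ge> 0"
  have "m t * (k2 * cpp t + \<theta> * z t) = k1 * xs t + \<mu> * z t"
    unfolding m_def using denominator_pos[OF \<open>t \<ge> 0\<close>] by simp
  moreover have "((\<lambda>t. xs t + z t) has_real_derivative
      (k2 * cpp t * m t - k1 * xs t) + z t * (\<theta> * m t - \<mu>)) (at t within {0..})"
    by (intro DERIV_add ode_xs ode_z \<open>t \<ge> 0\<close>)
  ultimately show "((\<lambda>t. xs t + z t) has_real_derivative 0) (at t within {0..})"
    by (simp add: algebra_simps)
qed

lemma z_deriv_logistic:
  assumes "t \<ge> 0"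
  shows "(z has_real_derivative
      z t * ((\<theta> * k1 * (xs 0 + z 0) - \<mu> * k2 * cpp t) - \<theta> * k1 * z t) / (k2 * cpp t + \<theta> * z t))
    (at t within {0..})"
proof -
  have "\<theta> * m t - \<mu>
      = ((\<theta> * k1 * (xs 0 + z 0) - \<mu> * k2 * cpp t) - \<theta> * k1 * z t) / (k2 * cpp t + \<theta> * z t)"
    unfolding m_def xs_z_const[OF assms, symmetric] using denominator_pos[OF assms]
    by (simp add: field_simps)
  then show ?thesis using ode_z[OF assms] by simp
qed

lemma denominator_le:
  "t \<ge> 0 \<Longrightarrow> k2 * cpp t + \<theta> * z t \<le> k2 * (c 0 + cp 0 + cpp 0) + \<theta> * (xs 0 + z 0)"
  using total_const[of t] xs_z_const[of t] state_pos[of t] params_pos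
  by (intro add_mono) (auto simp: state_pos_def)

end

theorem mainTheorem6:
  fixes k1 k2 k5 k6 k7 k8 \<theta> \<mu> :: real
    and c cp cpp xs z :: "real \<Rightarrow> real"
  assumes pos: "k1 > 0" "k2 > 0" "k5 > 0" "k6 > 0" "k7 > 0" "k8 > 0" "\<theta> > 0" "\<mu> > 0"
    and init: "c 0 > 0" "cp 0 > 0" "cpp 0 > 0" "xs 0 > 0" "z 0 > 0"
    and m_def: "\<And>t. m t = (k1 * xs t + \<mu> * z t) / (k2 * cpp t + \<theta> * z t)"
    and ode_c: "\<And>t. t \<ge> 0 \<Longrightarrow>
        (c has_real_derivative (k6 * cp t - k5 * c t)) (at t within {0..})"
    and ode_cp: "\<And>t. t \<ge> 0 \<Longrightarrow>
        (cp has_real_derivative (k5 * c t + k8 * cpp t - (k6 + k7) * cp t)) (at t within {0..})"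
    and ode_cpp: "\<And>t. t \<ge> 0 \<Longrightarrow>
        (cpp has_real_derivative (k7 * cp t - k8 * cpp t)) (at t within {0..})"
    and ode_xs: "\<And>t. t \<ge> 0 \<Longrightarrow>
        (xs has_real_derivative (k2 * cpp t * m t - k1 * xs t)) (at t within {0..})"
    and ode_z: "\<And>t. t \<ge> 0 \<Longrightarrow>
        (z has_real_derivative (z t * (\<theta> * m t - \<mu>))) (at t within {0..})"
    and M_def: "M = xs 0 + z 0"
    and L_def: "L = c 0 + cp 0 + cpp 0"
    and cbar_def: "cbar = k5 * k6 * k7 * k8 * L /
        (k6\<^sup>2 * k8\<^sup>2 + k5 * k6 * k8\<^sup>2 + k5 * k6 * k7 * k8)"
    and hyp: "\<theta> * k1 * M > \<mu> * k2 * cbar"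
  shows "(z \<longlongrightarrow> (\<theta> * k1 * M - \<mu> * k2 * cbar) / (\<theta> * k1)) at_top"
proof -
  interpret S: dimer_catalyzer k5 k6 k7 k8 c cp cpp k1 k2 \<theta> \<mu> xs z m
    by unfold_locales (fact pos init m_def ode_c ode_cp ode_cpp ode_xs ode_z)+
  have "cbar = k5 * k7 * L / (k6 * k8 + k5 * k8 + k5 * k7)"
  proof -
    have "k6\<^sup>2 * k8\<^sup>2 + k5 * k6 * k8\<^sup>2 + k5 * k6 * k7 * k8 = k6 * k8 * (k6 * k8 + k5 * k8 + k5 * k7)"
      by (simp add: algebra_simps power2_eq_square)
    then show ?thesis unfolding cbar_def using pos by simp
  qed
  then have "(cpp \<longlongrightarrow> cbar) at_top" using S.cpp_tendsto L_def by simp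
  then have q_lim: "((\<lambda>t. \<theta> * k1 * M - \<mu> * k2 * cpp t) \<longlongrightarrow>
      \<theta> * k1 * ((\<theta> * k1 * M - \<mu> * k2 * cbar) / (\<theta> * k1))) at_top"
    using pos by (auto intro!: tendsto_eq_intros)
  show ?thesis
  proof (rule logistic_tendsto[OF _ _ S.denominator_pos S.denominator_le _ _ q_lim])
    show "(z has_real_derivative z t * ((\<theta> * k1 * M - \<mu> * k2 * cpp t) - \<theta> * k1 * z t)
        / (k2 * cpp t + \<theta> * z t)) (at t within {0..})" if "t \<ge> 0" for t
      using S.z_deriv_logistic[OF that] M_def by simp
  qed (use S.state_pos pos hyp in \<open>auto simp: S.state_pos_def\<close>)
qed

end
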